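(* Assume the setting described in the context. Let $\lambda\in\mathbb{R}^F$ satisfy $$\lambda_f\ge\sum_{\sigma\in f:\,\sigma'\in A(f,\sigma)}\rho(\sigma'\mid f,\sigma)\frac{\omega(\sigma)}{\omega(\sigma')}\quad\text{for all }f\in F,\ \sigma'\in\Omega.$$ Let $W$ be a word and $\mathcal{X}$ a valid set of walks such that $W$ is a prefix of the word of every walk in $\mathcal{X}$. Then $$\sum_{\tau\in\mathcal{X}}p(\tau)\le\gamma^{\mathrm{init}}\cdot\lambda_W.$$
   Context: Setting: $\Omega$ is a finite set and $F$ a finite set of flaws, each a nonempty subset of $\Omega$; $F_\sigma=\{f:\sigma\in f\}$. For $\sigma\in\Omega$ and $f\in F_\sigma$ there is a probability distribution $\rho(\cdot\mid f,\sigma)$ on $\Omega$ with support $A(f,\sigma)$. $\omega$ is a probability distribution on $\Omega$ with $\omega(\sigma)>0$ for all $\sigma$, and $\omega^{\mathrm{init}}$ is a probability distribution on $\Omega$. Set $\gamma^{\mathrm{init}}=\max_\sigma\omega^{\mathrm{init}}(\sigma)/\omega(\sigma)$. A walk is a sequence $\tau=\sigma_1\xrightarrow{w_1}\sigma_2\cdots\xrightarrow{w_t}\sigma_{t+1}$ with $w_i\in F_{\sigma_i}$ and $\sigma_{i+1}\in A(w_i,\sigma_i)$. Its word is $w_1\ldots w_t$, and $$p(\tau)=\omega^{\mathrm{init}}(\sigma_1)\prod_{i=1}^t\rho(\sigma_{i+1}\mid w_i,\sigma_i).$$ A word is a finite sequence of flaws; for $W=w_1\ldots w_k$, $\lambda_W=\prod_i\lambda_{w_i}$.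 A word $W$ is a prefix of a word $U$ if $U=WU'$ for some word $U'$. A deterministic strategy assigns to each walk whose last state $\sigma$ is flawed a flaw in $F_\sigma$; a walk follows it if each $w_i$ is the flaw assigned to the prefix ending at $\sigma_i$. A set of walks is valid if all its walks follow one common deterministic strategy and no walk in it is a proper prefix of another (i.e., a walk $\tau$ is never an initial segment, different from $\tau'$, of some $\tau'$ in the set). *)

theory Defs
  imports "HOL-Analysis.Analysis"
begin

text \<open>States have type 'a; a flaw is a subset of the state space, so flaws have type 'a set.
  rho f s s' stands for rho(s' | f, s).  A walk
  s_1 -w_1-> s_2 ... -w_t-> s_(t+1) is represented as the pair (ss, ws) with
  ss = [s_1, ..., s_(t+1)] and ws = [w_1, ..., w_t].\<close>

definition flaws_at :: "'a set set \<Rightarrow> 'a \<Rightarrow> 'a set set" where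
  "flaws_at F s = {f \<in> F. s \<in> f}"

definition prob_dist :: "'a set \<Rightarrow> ('a \<Rightarrow> real) \<Rightarrow> bool" where
  "prob_dist \<Omega> d \<longleftrightarrow> (\<forall>x\<in>\<Omega>. d x \<ge> 0) \<and> (\<Sum>x\<in>\<Omega>. d x) = 1"

definition supp :: "'a set \<Rightarrow> ('a set \<Rightarrow> 'a \<Rightarrow> 'a \<Rightarrow> real) \<Rightarrow> 'a set \<Rightarrow> 'a \<Rightarrow> 'a set" where
  "supp \<Omega> rho f s = {s' \<in> \<Omega>. rho f s s' > 0}"

definition setting ::
  "'a set \<Rightarrow> 'a set set \<Rightarrow> ('a set \<Rightarrow> 'a \<Rightarrow> 'a \<Rightarrow> real) \<Rightarrow> ('a \<Rightarrow> real) \<Rightarrow> ('a \<Rightarrow> real) \<Rightarrow> bool" where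
  "setting \<Omega> F rho \<omega> \<omega>i \<longleftrightarrow>
     finite \<Omega> \<and> finite F \<and> (\<forall>f\<in>F. f \<noteq> {} \<and> f \<subseteq> \<Omega>) \<and>
     (\<forall>s\<in>\<Omega>. \<forall>f\<in>flaws_at F s. prob_dist \<Omega> (rho f s)) \<and>
     prob_dist \<Omega> \<omega> \<and> (\<forall>s\<in>\<Omega>. \<omega> s > 0) \<and> prob_dist \<Omega> \<omega>i"

definition gamma_init :: "'a set \<Rightarrow> ('a \<Rightarrow> real) \<Rightarrow> ('a \<Rightarrow> real) \<Rightarrow> real" where
  "gamma_init \<Omega> \<omega> \<omega>i = Max ((\<lambda>s. \<omega>i s / \<omega> s) ` \<Omega>)"

definition is_walk ::
  "'a set \<Rightarrow> 'a set set \<Rightarrow> ('a set \<Rightarrow> 'a \<Rightarrow> 'a \<Rightarrow> real) \<Rightarrow> 'a list \<times> 'a set list \<Rightarrow> bool" where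
  "is_walk \<Omega> F rho \<tau> \<longleftrightarrow>
     (let ss = fst \<tau>; ws = snd \<tau> in
       length ss = Suc (length ws) \<and> set ss \<subseteq> \<Omega> \<and>
       (\<forall>i<length ws. ws ! i \<in> flaws_at F (ss ! i) \<and>
                      ss ! Suc i \<in> supp \<Omega> rho (ws ! i) (ss ! i)))"

definition walk_prob ::
  "('a \<Rightarrow> real) \<Rightarrow> ('a set \<Rightarrow> 'a \<Rightarrow> 'a \<Rightarrow> real) \<Rightarrow> 'a list \<times> 'a set list \<Rightarrow> real" where
  "walk_prob \<omega>i rho \<tau> =
     (let ss = fst \<tau>; ws = snd \<tau> in
       \<omega>i (ss ! 0) * (\<Prod>i<length ws. rho (ws ! i) (ss ! i) (ss ! Suc i)))"

definition word_weight :: "('a set \<Rightarrow> real) \<Rightarrow> 'a set list \<Rightarrow> real" where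
  "word_weight lam W = prod_list (map lam W)"

definition det_strategy ::
  "'a set \<Rightarrow> 'a set set \<Rightarrow> ('a set \<Rightarrow> 'a \<Rightarrow> 'a \<Rightarrow> real) \<Rightarrow> ('a list \<times> 'a set list \<Rightarrow> 'a set) \<Rightarrow> bool" where
  "det_strategy \<Omega> F rho S \<longleftrightarrow>
     (\<forall>\<tau>. is_walk \<Omega> F rho \<tau> \<and> flaws_at F (last (fst \<tau>)) \<noteq> {} \<longrightarrow>
           S \<tau> \<in> flaws_at F (last (fst \<tau>)))"

definition follows :: "('a list \<times> 'a set list \<Rightarrow> 'a set) \<Rightarrow> 'a list \<times> 'a set list \<Rightarrow> bool" where
  "follows S \<tau> \<longleftrightarrow>
     (\<forall>i<length (snd \<tau>). snd \<tau> ! i = S (take (Suc i) (fst \<tau>), take i (snd \<tau>)))"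

definition walk_prefix :: "'a list \<times> 'a set list \<Rightarrow> 'a list \<times> 'a set list \<Rightarrow> bool" where
  "walk_prefix \<tau> \<tau>' \<longleftrightarrow>
     (\<exists>us vs. fst \<tau>' = fst \<tau> @ us \<and> snd \<tau>' = snd \<tau> @ vs)"

definition valid_walks ::
  "'a set \<Rightarrow> 'a set set \<Rightarrow> ('a set \<Rightarrow> 'a \<Rightarrow> 'a \<Rightarrow> real) \<Rightarrow> ('a list \<times> 'a set list) set \<Rightarrow> bool" where
  "valid_walks \<Omega> F rho X \<longleftrightarrow>
     (\<forall>\<tau>\<in>X. is_walk \<Omega> F rho \<tau>) \<and>
     (\<exists>S. det_strategy \<Omega> F rho S \<and> (\<forall>\<tau>\<in>X. follows S \<tau>)) \<and>
     (\<forall>\<tau>\<in>X. \<forall>\<tau>'\<in>X. walk_prefix \<tau> \<tau>' \<longrightarrow> \<tau> = \<tau>')"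

end

theory Submission
  imports Defs
begin

text \<open>
  At every walk the strategy selects one flaw, and the next state is then distributed
  according to rho; so the probability of a walk splits among its one-step extensions, and
  by induction on the length a prefix-free family of strategy-following walks extending a
  walk \<tau> has total probability at most p(\<tau>). Grouping the walks of X by their initial
  segment with word W thus bounds their total probability by that of all walks with word W.
  The mass of the walks with word W ending in \<sigma>' is at most gamma_init * lambda_W * \<omega>(\<sigma>'):
  for the empty word this is the definition of gamma_init, and appending a flaw f yields the
  factor \<Sum>\<sigma>. rho(\<sigma>' | f, \<sigma>) \<omega>(\<sigma>), which the hypothesis on lambda_f bounds by
  lambda_f * \<omega>(\<sigma>'). Summing over \<sigma>' gives gamma_init * lambda_W.
\<close>

lemma is_walk_Pair:
  "is_walk \<Omega> F rho (ss, ws) \<longleftrightarrow>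
     length ss = Suc (length ws) \<and> set ss \<subseteq> \<Omega> \<and>
     (\<forall>i<length ws. ws ! i \<in> flaws_at F (ss ! i) \<and> ss ! Suc i \<in> supp \<Omega> rho (ws ! i) (ss ! i))"
  unfolding is_walk_def by simp

lemma is_walk_length: "is_walk \<Omega> F rho \<tau> \<Longrightarrow> length (fst \<tau>) = Suc (length (snd \<tau>))"
  unfolding is_walk_def Let_def by simp

lemma is_walk_last_in: "is_walk \<Omega> F rho (ss, ws) \<Longrightarrow> last ss \<in> \<Omega>"
  unfolding is_walk_Pair by (metis last_in_set list.size(3) nat.distinct(1) subsetD)

lemma is_walk_snoc:
  "is_walk \<Omega> F rho (ss @ [x], ws @ [f]) \<longleftrightarrow>
     is_walk \<Omega> F rho (ss, ws) \<and> f \<in> flaws_at F (last ss) \<and> x \<in> supp \<Omega> rho f (last ss)"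
proof (cases "length ss = Suc (length ws)")
  case True
  then have "last ss = ss ! length ws"
    by (metis diff_Suc_1 last_conv_nth list.size(3) nat.distinct(1))
  with True show ?thesis
    unfolding is_walk_Pair length_append_singleton All_less_Suc by (auto simp: nth_append supp_def)
qed (auto simp: is_walk_Pair)

lemma walk_prefix_is_walk:
  assumes "walk_prefix (ss, ws) \<tau>" "is_walk \<Omega> F rho \<tau>" "length ss = Suc (length ws)"
  shows "is_walk \<Omega> F rho (ss, ws)"
proof -
  obtain us vs where "\<tau> = (ss @ us, ws @ vs)"
    using assms(1) unfolding walk_prefix_def by (metis prod.collapse fst_conv snd_conv)
  with assms(2) have walk: "is_walk \<Omega> F rho (ss @ us, ws @ vs)" by simp
  have "ws ! i \<in> flaws_at F (ss ! i) \<and> ss ! Suc i \<in> supp \<Omega> rho (ws ! i) (ss ! i)"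
    if "i < length ws" for i
    using walk that assms(3) unfolding is_walk_Pair
    by (auto simp: nth_append dest!: spec[of _ i])
  with walk assms(3) show ?thesis
    unfolding is_walk_Pair by simp
qed

lemma walk_prob_snoc:
  assumes "length ss = Suc (length ws)"
  shows "walk_prob \<omega>i rho (ss @ [x], ws @ [f]) = walk_prob \<omega>i rho (ss, ws) * rho f (last ss) x"
proof -
  have "last ss = ss ! length ws"
    using assms by (metis diff_Suc_1 last_conv_nth list.size(3) nat.distinct(1))
  moreover have "(\<Prod>i<length ws. rho ((ws @ [f]) ! i) ((ss @ [x]) ! i) ((ss @ [x]) ! Suc i))
      = (\<Prod>i<length ws. rho (ws ! i) (ss ! i) (ss ! Suc i))"
    using assms by (intro prod.cong) (auto simp: nth_append)
  ultimately show ?thesis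
    using assms unfolding walk_prob_def by (simp add: nth_append)
qed

lemma walk_prob_nonneg:
  assumes "prob_dist \<Omega> \<omega>i" "is_walk \<Omega> F rho \<tau>"
  shows "0 \<le> walk_prob \<omega>i rho \<tau>"
proof -
  obtain ss ws where \<tau>: "\<tau> = (ss, ws)" by fastforce
  have "ss ! 0 \<in> \<Omega>" and "\<forall>i<length ws. 0 < rho (ws ! i) (ss ! i) (ss ! Suc i)"
    using assms(2) unfolding \<tau> is_walk_Pair supp_def by auto
  with assms(1) show ?thesis
    unfolding \<tau> walk_prob_def prob_dist_def Let_def fst_conv snd_conv
    by (intro mult_nonneg_nonneg prod_nonneg) (auto intro: less_imp_le)
qed

lemma walk_prefix_same_length:
  assumes "walk_prefix (ss, ws) \<tau>" "is_walk \<Omega> F rho \<tau>" "length ss = Suc (length ws)"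
    and "length (snd \<tau>) \<le> length ws"
  shows "\<tau> = (ss, ws)"
proof -
  obtain us vs where "fst \<tau> = ss @ us" "snd \<tau> = ws @ vs"
    using assms(1) unfolding walk_prefix_def by auto
  moreover have "length (fst \<tau>) = Suc (length (snd \<tau>))"
    using is_walk_length[OF assms(2)] .
  ultimately have "vs = []" "us = []"
    using assms(3,4) by simp_all
  with \<open>fst \<tau> = ss @ us\<close> \<open>snd \<tau> = ws @ vs\<close> show ?thesis by (simp add: prod_eq_iff)
qed

lemma follows_walk_prefix_Suc:
  assumes "follows S \<tau>" "is_walk \<Omega> F rho \<tau>" "walk_prefix (ss, ws) \<tau>"
    and "length ss = Suc (length ws)" "length ws < length (snd \<tau>)"
  shows "walk_prefix (ss @ [fst \<tau> ! length ss], ws @ [S (ss, ws)]) \<tau>"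
proof -
  obtain us vs where uv: "fst \<tau> = ss @ us" "snd \<tau> = ws @ vs"
    using assms(3) unfolding walk_prefix_def by auto
  moreover have "vs \<noteq> []" "us \<noteq> []"
    using uv assms(4,5) is_walk_length[OF assms(2)] by auto
  ultimately obtain u us' v vs' where uv': "fst \<tau> = ss @ u # us'" "snd \<tau> = ws @ v # vs'"
    by (auto simp: neq_Nil_conv)
  have "snd \<tau> ! length ws = S (take (Suc (length ws)) (fst \<tau>), take (length ws) (snd \<tau>))"
    using assms(1,5) unfolding follows_def by blast
  then have "v = S (ss, ws)"
    using uv' assms(4) by simp
  with uv' assms(4) show ?thesis
    unfolding walk_prefix_def by (simp add: nth_append)
qed

lemma valid_walks_subset: "valid_walks \<Omega> F rho X \<Longrightarrow> Y \<subseteq> X \<Longrightarrow> valid_walks \<Omega> F rho Y"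
  unfolding valid_walks_def by (meson subsetD)

lemma valid_walks_is_walk: "valid_walks \<Omega> F rho X \<Longrightarrow> \<tau> \<in> X \<Longrightarrow> is_walk \<Omega> F rho \<tau>"
  unfolding valid_walks_def by simp

lemma valid_walks_prefix_eq:
  "valid_walks \<Omega> F rho X \<Longrightarrow> \<tau> \<in> X \<Longrightarrow> \<tau>' \<in> X \<Longrightarrow> walk_prefix \<tau> \<tau>' \<Longrightarrow> \<tau> = \<tau>'"
  unfolding valid_walks_def by (elim conjE) simp

lemma prob_dist_sum_le_1:
  assumes "prob_dist \<Omega> d" "finite \<Omega>" "A \<subseteq> \<Omega>"
  shows "sum d A \<le> 1"
proof -
  have "sum d A \<le> sum d \<Omega>"
    using assms unfolding prob_dist_def by (intro sum_mono2) auto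
  with assms(1) show ?thesis unfolding prob_dist_def by simp
qed

lemma sum_walk_prob_snoc_le:
  assumes setting: "setting \<Omega> F rho \<omega> \<omega>i" and walk: "is_walk \<Omega> F rho (ss, ws)"
    and snoc: "\<And>x. x \<in> C \<Longrightarrow> is_walk \<Omega> F rho (ss @ [x], ws @ [f])"
  shows "(\<Sum>x\<in>C. walk_prob \<omega>i rho (ss @ [x], ws @ [f])) \<le> walk_prob \<omega>i rho (ss, ws)"
proof -
  have len: "length ss = Suc (length ws)" using is_walk_length[OF walk] by simp
  have fin: "finite \<Omega>" and init: "prob_dist \<Omega> \<omega>i"
    using setting unfolding setting_def by simp_all
  have nonneg: "0 \<le> walk_prob \<omega>i rho (ss, ws)"
    using walk_prob_nonneg[OF init walk] .
  show ?thesis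
  proof (cases "C = {}")
    case True
    with nonneg show ?thesis by simp
  next
    case False
    then obtain x0 where "x0 \<in> C" by blast
    then have "f \<in> flaws_at F (last ss)" using snoc unfolding is_walk_snoc by blast
    moreover have "last ss \<in> \<Omega>" using walk by (rule is_walk_last_in)
    ultimately have "prob_dist \<Omega> (rho f (last ss))"
      using setting unfolding setting_def by blast
    moreover have "C \<subseteq> \<Omega>" using snoc unfolding is_walk_snoc supp_def by blast
    ultimately have "(\<Sum>x\<in>C. rho f (last ss) x) \<le> 1"
      by (rule prob_dist_sum_le_1[OF _ fin])
    have "(\<Sum>x\<in>C. walk_prob \<omega>i rho (ss @ [x], ws @ [f]))
        = walk_prob \<omega>i rho (ss, ws) * (\<Sum>x\<in>C. rho f (last ss) x)"
      by (simp add: walk_prob_snoc[OF len] sum_distrib_left)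
    also have "\<dots> \<le> walk_prob \<omega>i rho (ss, ws)"
      using \<open>(\<Sum>x\<in>C. rho f (last ss) x) \<le> 1\<close> nonneg by (rule mult_left_le)
    finally show ?thesis .
  qed
qed

lemma valid_walks_next_flaw:
  assumes valid: "valid_walks \<Omega> F rho Y" and len: "length ss = Suc (length ws)"
    and prefix: "\<And>\<tau>. \<tau> \<in> Y \<Longrightarrow> walk_prefix (ss, ws) \<tau>" and "(ss, ws) \<notin> Y"
  obtains f where "\<And>\<tau>. \<tau> \<in> Y \<Longrightarrow> walk_prefix (ss @ [fst \<tau> ! length ss], ws @ [f]) \<tau>"
proof -
  have longer: "length ws < length (snd \<tau>)" if "\<tau> \<in> Y" for \<tau>
  proof (rule ccontr)
    assume "\<not> length ws < length (snd \<tau>)"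
    then have "\<tau> = (ss, ws)"
      by (intro walk_prefix_same_length[OF prefix[OF that] valid_walks_is_walk[OF valid that] len]) simp
    with \<open>(ss, ws) \<notin> Y\<close> that show False by simp
  qed
  obtain S where S: "\<forall>\<tau>\<in>Y. follows S \<tau>"
    using valid unfolding valid_walks_def by auto
  show ?thesis
  proof (rule that)
    fix \<tau> assume "\<tau> \<in> Y"
    with S show "walk_prefix (ss @ [fst \<tau> ! length ss], ws @ [S (ss, ws)]) \<tau>"
      by (intro follows_walk_prefix_Suc[OF _ valid_walks_is_walk[OF valid] prefix len longer]) simp_all
  qed
qed

lemma valid_walks_extensions_prob_le:
  assumes setting: "setting \<Omega> F rho \<omega> \<omega>i"
    and "finite Y" "valid_walks \<Omega> F rho Y" "is_walk \<Omega> F rho (ss, ws)"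
    and "\<forall>\<tau>\<in>Y. walk_prefix (ss, ws) \<tau>"
  shows "sum (walk_prob \<omega>i rho) Y \<le> walk_prob \<omega>i rho (ss, ws)"
proof -
  have init: "prob_dist \<Omega> \<omega>i" using setting unfolding setting_def by simp
  have "finite ((\<lambda>\<tau>. length (snd \<tau>)) ` Y)" using \<open>finite Y\<close> by simp
  then obtain n where n: "\<forall>k\<in>(\<lambda>\<tau>. length (snd \<tau>)) ` Y. k \<le> n"
    unfolding finite_nat_set_iff_bounded_le by blast
  have "\<exists>m. \<forall>\<tau>\<in>Y. length (snd \<tau>) < length ws + m"
    using n by (intro exI[of _ "Suc n"]) auto
  then obtain m where "\<forall>\<tau>\<in>Y. length (snd \<tau>) < length ws + m" by blast
  with assms(2-) show ?thesis
  proof (induction m arbitrary: ss ws Y)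
    case 0
    have "length ws \<le> length (snd \<tau>)" if "\<tau> \<in> Y" for \<tau>
      using "0.prems"(4) that unfolding walk_prefix_def by auto
    with "0.prems"(5) have "Y = {}" by fastforce
    then show ?case using walk_prob_nonneg[OF init "0.prems"(3)] by simp
  next
    case (Suc m)
    show ?case
    proof (cases "(ss, ws) \<in> Y")
      case True
      have "\<tau> = (ss, ws)" if "\<tau> \<in> Y" for \<tau>
        using valid_walks_prefix_eq[OF Suc.prems(2) True that] Suc.prems(4) that by simp
      with True have "Y = {(ss, ws)}" by blast
      then show ?thesis by simp
    next
      case False
      have len: "length ss = Suc (length ws)"
        using is_walk_length[OF Suc.prems(3)] by simp
      note walks = valid_walks_is_walk[OF Suc.prems(2)]
      define next_state where "next_state \<tau> = fst \<tau> ! length ss" for \<tau> :: "'a list \<times> 'a set list"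
      obtain f where child: "\<And>\<tau>. \<tau> \<in> Y \<Longrightarrow> walk_prefix (ss @ [next_state \<tau>], ws @ [f]) \<tau>"
        using Suc.prems(4) valid_walks_next_flaw[OF Suc.prems(2) len _ False, folded next_state_def]
        by blast
      have child_walk: "is_walk \<Omega> F rho (ss @ [x], ws @ [f])" if x: "x \<in> next_state ` Y" for x
      proof -
        obtain \<tau> where "\<tau> \<in> Y" "x = next_state \<tau>" using x by blast
        with len show ?thesis
          using walk_prefix_is_walk[OF child[OF \<open>\<tau> \<in> Y\<close>] walks[OF \<open>\<tau> \<in> Y\<close>]] by simp
      qed
      have "sum (walk_prob \<omega>i rho) Y
          = (\<Sum>x\<in>next_state ` Y. sum (walk_prob \<omega>i rho) {\<tau>\<in>Y. next_state \<tau> = x})"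
        using Suc.prems(1) by (rule sum.image_gen)
      also have "\<dots> \<le> (\<Sum>x\<in>next_state ` Y. walk_prob \<omega>i rho (ss @ [x], ws @ [f]))"
      proof (rule sum_mono)
        fix x assume x: "x \<in> next_state ` Y"
        show "sum (walk_prob \<omega>i rho) {\<tau>\<in>Y. next_state \<tau> = x} \<le> walk_prob \<omega>i rho (ss @ [x], ws @ [f])"
        proof (rule Suc.IH)
          show "finite {\<tau>\<in>Y. next_state \<tau> = x}" using Suc.prems(1) by simp
          show "valid_walks \<Omega> F rho {\<tau>\<in>Y. next_state \<tau> = x}"
            using Suc.prems(2) by (rule valid_walks_subset) simp
          show "is_walk \<Omega> F rho (ss @ [x], ws @ [f])" using x by (rule child_walk)
          show "\<forall>\<tau>\<in>{\<tau>\<in>Y. next_state \<tau> = x}. walk_prefix (ss @ [x], ws @ [f]) \<tau>"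
            using child by blast
          show "\<forall>\<tau>\<in>{\<tau>\<in>Y. next_state \<tau> = x}. length (snd \<tau>) < length (ws @ [f]) + m"
            using Suc.prems(5) by simp
        qed
      qed
      also have "\<dots> \<le> walk_prob \<omega>i rho (ss, ws)"
        by (rule sum_walk_prob_snoc_le[OF setting Suc.prems(3) child_walk])
      finally show ?thesis .
    qed
  qed
qed

lemma gamma_init_bound:
  assumes "setting \<Omega> F rho \<omega> \<omega>i" "s \<in> \<Omega>"
  shows "\<omega>i s \<le> gamma_init \<Omega> \<omega> \<omega>i * \<omega> s"
proof -
  have "finite \<Omega>" and "0 < \<omega> s"
    using assms unfolding setting_def by simp_all
  moreover have "\<omega>i s / \<omega> s \<le> gamma_init \<Omega> \<omega> \<omega>i"
    unfolding gamma_init_def using calculation(1) assms(2) by (intro Max_ge) simp_all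
  ultimately show ?thesis by (simp add: pos_divide_le_eq)
qed

lemma gamma_init_nonneg:
  assumes "setting \<Omega> F rho \<omega> \<omega>i"
  shows "0 \<le> gamma_init \<Omega> \<omega> \<omega>i"
proof -
  have "(\<Sum>s\<in>\<Omega>. \<omega> s) = 1" using assms unfolding setting_def prob_dist_def by simp
  then obtain s where s: "s \<in> \<Omega>" by force
  then have "0 \<le> \<omega>i s" and "0 < \<omega> s"
    using assms unfolding setting_def prob_dist_def by simp_all
  moreover have "0 \<le> gamma_init \<Omega> \<omega> \<omega>i * \<omega> s"
    using gamma_init_bound[OF assms s] calculation by linarith
  ultimately show ?thesis by (simp add: zero_le_mult_iff)
qed

definition charges_dominate ::
  "'a set \<Rightarrow> 'a set set \<Rightarrow> ('a set \<Rightarrow> 'a \<Rightarrow> 'a \<Rightarrow> real) \<Rightarrow> ('a \<Rightarrow> real) \<Rightarrow> ('a set \<Rightarrow> real) \<Rightarrow> bool"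
  where
  "charges_dominate \<Omega> F rho \<omega> lam \<longleftrightarrow>
     (\<forall>f\<in>F. \<forall>s'\<in>\<Omega>.
        lam f \<ge> (\<Sum>s\<in>{s \<in> f. s' \<in> supp \<Omega> rho f s}. rho f s s' * (\<omega> s / \<omega> s')))"

lemma lam_nonneg:
  assumes setting: "setting \<Omega> F rho \<omega> \<omega>i"
    and lam: "charges_dominate \<Omega> F rho \<omega> lam"
    and "f \<in> F"
  shows "0 \<le> lam f"
proof -
  have "(\<Sum>s\<in>\<Omega>. \<omega> s) = 1" using setting unfolding setting_def prob_dist_def by simp
  then obtain s' where s': "s' \<in> \<Omega>" by force
  have pos: "0 < \<omega> s" if "s \<in> \<Omega>" for s
    using setting that unfolding setting_def by simp
  have "f \<subseteq> \<Omega>" using setting \<open>f \<in> F\<close> unfolding setting_def by simp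
  then have "0 \<le> (\<Sum>s\<in>{s \<in> f. s' \<in> supp \<Omega> rho f s}. rho f s s' * (\<omega> s / \<omega> s'))"
    using pos s' unfolding supp_def by (intro sum_nonneg) (auto intro!: mult_nonneg_nonneg less_imp_le)
  also have "\<dots> \<le> lam f" using lam \<open>f \<in> F\<close> s' unfolding charges_dominate_def by simp
  finally show ?thesis .
qed

definition word_walks_to ::
  "'a set \<Rightarrow> 'a set set \<Rightarrow> ('a set \<Rightarrow> 'a \<Rightarrow> 'a \<Rightarrow> real) \<Rightarrow> 'a set list \<Rightarrow> 'a \<Rightarrow> 'a list set" where
  "word_walks_to \<Omega> F rho W s = {ss. is_walk \<Omega> F rho (ss, W) \<and> last ss = s}"

lemma finite_word_walks: "finite \<Omega> \<Longrightarrow> finite {ss. is_walk \<Omega> F rho (ss, W)}"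
  by (rule finite_subset[OF _ finite_lists_length_eq[of \<Omega> "Suc (length W)"]])
    (auto simp: is_walk_Pair)

lemma word_walks_to_snoc:
  assumes "f \<in> F"
  shows "word_walks_to \<Omega> F rho (W @ [f]) s' =
    (\<Union>s\<in>{s \<in> f. s' \<in> supp \<Omega> rho f s}. (\<lambda>ss. ss @ [s']) ` word_walks_to \<Omega> F rho W s)"
proof (intro set_eqI iffI)
  fix ss' assume "ss' \<in> word_walks_to \<Omega> F rho (W @ [f]) s'"
  then have walk: "is_walk \<Omega> F rho (ss', W @ [f])" and last: "last ss' = s'"
    unfolding word_walks_to_def by simp_all
  then have "ss' \<noteq> []" using is_walk_length[OF walk] by auto
  then have ss': "ss' = butlast ss' @ [s']" using last append_butlast_last_id by metis
  with walk have "is_walk \<Omega> F rho (butlast ss', W)"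
    and "last (butlast ss') \<in> {s \<in> f. s' \<in> supp \<Omega> rho f s}"
    using is_walk_snoc[of \<Omega> F rho "butlast ss'" s' W f] unfolding flaws_at_def by auto
  with ss' show "ss' \<in> (\<Union>s\<in>{s \<in> f. s' \<in> supp \<Omega> rho f s}. (\<lambda>ss. ss @ [s']) ` word_walks_to \<Omega> F rho W s)"
    unfolding word_walks_to_def by blast
next
  fix ss' assume "ss' \<in> (\<Union>s\<in>{s \<in> f. s' \<in> supp \<Omega> rho f s}. (\<lambda>ss. ss @ [s']) ` word_walks_to \<Omega> F rho W s)"
  with assms show "ss' \<in> word_walks_to \<Omega> F rho (W @ [f]) s'"
    unfolding word_walks_to_def by (auto simp: is_walk_snoc flaws_at_def)
qed

lemma word_walks_to_prob_le:
  assumes setting: "setting \<Omega> F rho \<omega> \<omega>i"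
    and lam: "charges_dominate \<Omega> F rho \<omega> lam"
  shows "set W \<subseteq> F \<Longrightarrow> s' \<in> \<Omega> \<Longrightarrow>
    (\<Sum>ss\<in>word_walks_to \<Omega> F rho W s'. walk_prob \<omega>i rho (ss, W))
      \<le> gamma_init \<Omega> \<omega> \<omega>i * word_weight lam W * \<omega> s'"
proof (induction W arbitrary: s' rule: rev_induct)
  case Nil
  have "word_walks_to \<Omega> F rho [] s' = {[s']}"
    using Nil.prems(2) by (auto simp: word_walks_to_def is_walk_Pair length_Suc_conv)
  then show ?case
    using gamma_init_bound[OF setting Nil.prems(2)]
    by (simp add: walk_prob_def word_weight_def)
next
  case (snoc f W)
  have "f \<in> F" and WF: "set W \<subseteq> F" using snoc.prems(1) by simp_all
  have fin: "finite \<Omega>" and f_sub: "f \<subseteq> \<Omega>" and pos: "\<And>s. s \<in> \<Omega> \<Longrightarrow> 0 < \<omega> s"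
    using setting \<open>f \<in> F\<close> unfolding setting_def by simp_all
  define T where "T = {s \<in> f. s' \<in> supp \<Omega> rho f s}"
  define B where "B = gamma_init \<Omega> \<omega> \<omega>i * word_weight lam W"
  have B: "0 \<le> B"
    unfolding B_def word_weight_def using gamma_init_nonneg[OF setting] lam_nonneg[OF setting lam] WF
    by (auto intro!: mult_nonneg_nonneg prod_list_nonneg simp: subset_iff)
  have T: "finite T" "T \<subseteq> \<Omega>" "\<And>s. s \<in> T \<Longrightarrow> 0 < rho f s s'"
    using fin f_sub unfolding T_def supp_def by (auto intro: finite_subset)
  have finite_walks: "finite (word_walks_to \<Omega> F rho W s)" for s
    using finite_word_walks[OF fin, of F rho W] unfolding word_walks_to_def
    by (rule finite_subset[rotated]) blast
  have snoc_prob: "walk_prob \<omega>i rho (ss @ [s'], W @ [f]) = walk_prob \<omega>i rho (ss, W) * rho f s s'"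
    if "ss \<in> word_walks_to \<Omega> F rho W s" for ss s
    using that walk_prob_snoc[of ss W \<omega>i rho s' f] is_walk_length[of \<Omega> F rho "(ss, W)"]
    unfolding word_walks_to_def by simp
  have "(\<Sum>ss\<in>word_walks_to \<Omega> F rho (W @ [f]) s'. walk_prob \<omega>i rho (ss, W @ [f]))
      = (\<Sum>s\<in>T. \<Sum>ss\<in>(\<lambda>ss. ss @ [s']) ` word_walks_to \<Omega> F rho W s. walk_prob \<omega>i rho (ss, W @ [f]))"
    unfolding word_walks_to_snoc[OF \<open>f \<in> F\<close>] T_def[symmetric]
    using T(1) finite_walks by (intro sum.UNION_disjoint) (auto simp: word_walks_to_def)
  also have "\<dots> = (\<Sum>s\<in>T. rho f s s' * (\<Sum>ss\<in>word_walks_to \<Omega> F rho W s. walk_prob \<omega>i rho (ss, W)))"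
    by (intro sum.cong refl)
      (simp add: sum.reindex inj_on_def snoc_prob sum_distrib_left mult.commute)
  also have "\<dots> \<le> (\<Sum>s\<in>T. rho f s s' * (B * \<omega> s))"
    using snoc.IH[OF WF] T unfolding B_def
    by (intro sum_mono mult_left_mono) (auto intro: less_imp_le)
  also have "\<dots> = B * \<omega> s' * (\<Sum>s\<in>T. rho f s s' * (\<omega> s / \<omega> s'))"
    using pos[OF snoc.prems(2)] by (simp add: sum_distrib_left field_simps)
  also have "\<dots> \<le> B * \<omega> s' * lam f"
    using lam \<open>f \<in> F\<close> snoc.prems(2) B pos[OF snoc.prems(2)] unfolding T_def charges_dominate_def
    by (intro mult_left_mono) auto
  also have "\<dots> = gamma_init \<Omega> \<omega> \<omega>i * word_weight lam (W @ [f]) * \<omega> s'"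
    unfolding B_def word_weight_def by simp
  finally show ?case .
qed

lemma word_walks_prob_le:
  assumes setting: "setting \<Omega> F rho \<omega> \<omega>i"
    and lam: "charges_dominate \<Omega> F rho \<omega> lam"
    and "set W \<subseteq> F"
  shows "(\<Sum>ss | is_walk \<Omega> F rho (ss, W). walk_prob \<omega>i rho (ss, W))
    \<le> gamma_init \<Omega> \<omega> \<omega>i * word_weight lam W"
proof -
  have fin: "finite \<Omega>" and \<omega>: "(\<Sum>s\<in>\<Omega>. \<omega> s) = 1"
    using setting unfolding setting_def prob_dist_def by simp_all
  have "last ` {ss. is_walk \<Omega> F rho (ss, W)} \<subseteq> \<Omega>" by (auto intro: is_walk_last_in)
  from sum.group[OF finite_word_walks[OF fin] fin this, of "\<lambda>ss. walk_prob \<omega>i rho (ss, W)"]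
  have "(\<Sum>ss | is_walk \<Omega> F rho (ss, W). walk_prob \<omega>i rho (ss, W))
      = (\<Sum>s\<in>\<Omega>. \<Sum>ss\<in>word_walks_to \<Omega> F rho W s. walk_prob \<omega>i rho (ss, W))"
    unfolding word_walks_to_def by simp
  also have "\<dots> \<le> (\<Sum>s\<in>\<Omega>. gamma_init \<Omega> \<omega> \<omega>i * word_weight lam W * \<omega> s)"
    by (intro sum_mono word_walks_to_prob_le[OF setting lam assms(3)])
  also have "\<dots> = gamma_init \<Omega> \<omega> \<omega>i * word_weight lam W"
    by (simp add: sum_distrib_left[symmetric] \<omega>)
  finally show ?thesis .
qed

lemma valid_walks_prob_le:
  assumes setting: "setting \<Omega> F rho \<omega> \<omega>i"
    and lam: "charges_dominate \<Omega> F rho \<omega> lam"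
    and "set W \<subseteq> F" and "finite Y" and valid: "valid_walks \<Omega> F rho Y"
    and word: "\<forall>\<tau>\<in>Y. \<exists>U. snd \<tau> = W @ U"
  shows "sum (walk_prob \<omega>i rho) Y \<le> gamma_init \<Omega> \<omega> \<omega>i * word_weight lam W"
proof -
  have fin: "finite \<Omega>" and init: "prob_dist \<Omega> \<omega>i"
    using setting unfolding setting_def by simp_all
  define start where "start \<tau> = take (Suc (length W)) (fst \<tau>)" for \<tau> :: "'a list \<times> 'a set list"
  have start: "walk_prefix (start \<tau>, W) \<tau> \<and> is_walk \<Omega> F rho (start \<tau>, W)"
    if \<tau>: "\<tau> \<in> Y" for \<tau>
  proof -
    obtain U where U: "snd \<tau> = W @ U" using word \<tau> by blast
    have walk: "is_walk \<Omega> F rho \<tau>" using valid \<tau> by (rule valid_walks_is_walk)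
    then have "length (start \<tau>) = Suc (length W)"
      using is_walk_length[OF walk] U unfolding start_def by simp
    moreover have prefix: "walk_prefix (start \<tau>, W) \<tau>"
      unfolding walk_prefix_def start_def fst_conv snd_conv
    proof (intro exI conjI)
      show "fst \<tau> = take (Suc (length W)) (fst \<tau>) @ drop (Suc (length W)) (fst \<tau>)" by simp
    qed (fact U)
    ultimately show ?thesis using walk_prefix_is_walk[OF prefix walk] by simp
  qed
  have "sum (walk_prob \<omega>i rho) Y = (\<Sum>ss\<in>start ` Y. sum (walk_prob \<omega>i rho) {\<tau>\<in>Y. start \<tau> = ss})"
    using \<open>finite Y\<close> by (rule sum.image_gen)
  also have "\<dots> \<le> (\<Sum>ss\<in>start ` Y. walk_prob \<omega>i rho (ss, W))"
  proof (rule sum_mono)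
    fix ss assume "ss \<in> start ` Y"
    then obtain \<tau>0 where "\<tau>0 \<in> Y" "ss = start \<tau>0" by blast
    show "sum (walk_prob \<omega>i rho) {\<tau>\<in>Y. start \<tau> = ss} \<le> walk_prob \<omega>i rho (ss, W)"
    proof (rule valid_walks_extensions_prob_le[OF setting])
      show "finite {\<tau>\<in>Y. start \<tau> = ss}" using \<open>finite Y\<close> by simp
      show "valid_walks \<Omega> F rho {\<tau>\<in>Y. start \<tau> = ss}"
        by (rule valid_walks_subset[OF valid]) blast
      show "is_walk \<Omega> F rho (ss, W)" using start[OF \<open>\<tau>0 \<in> Y\<close>] \<open>ss = start \<tau>0\<close> by simp
      show "\<forall>\<tau>\<in>{\<tau>\<in>Y. start \<tau> = ss}. walk_prefix (ss, W) \<tau>"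
        using start by blast
    qed
  qed
  also have "\<dots> \<le> (\<Sum>ss | is_walk \<Omega> F rho (ss, W). walk_prob \<omega>i rho (ss, W))"
    using start walk_prob_nonneg[OF init] by (intro sum_mono2 finite_word_walks[OF fin]) auto
  also have "\<dots> \<le> gamma_init \<Omega> \<omega> \<omega>i * word_weight lam W"
    by (rule word_walks_prob_le[OF setting lam assms(3)])
  finally show ?thesis .
qed

theorem theorem6:
  fixes \<Omega> :: "'a set" and F :: "'a set set"
    and rho :: "'a set \<Rightarrow> 'a \<Rightarrow> 'a \<Rightarrow> real"
    and \<omega> \<omega>i :: "'a \<Rightarrow> real"
    and lam :: "'a set \<Rightarrow> real"
    and W :: "'a set list"
    and X :: "('a list \<times> 'a set list) set"
  assumes "setting \<Omega> F rho \<omega> \<omega>i"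
    and "\<forall>f\<in>F. \<forall>s'\<in>\<Omega>.
           lam f \<ge> (\<Sum>s\<in>{s \<in> f. s' \<in> supp \<Omega> rho f s}. rho f s s' * (\<omega> s / \<omega> s'))"
    and "set W \<subseteq> F"
    and "valid_walks \<Omega> F rho X"
    and "\<forall>\<tau>\<in>X. \<exists>U. snd \<tau> = W @ U"
  shows "walk_prob \<omega>i rho summable_on X \<and>
         (\<Sum>\<^sub>\<infinity>\<tau>\<in>X. walk_prob \<omega>i rho \<tau>) \<le> gamma_init \<Omega> \<omega> \<omega>i * word_weight lam W"
proof -
  have lam: "charges_dominate \<Omega> F rho \<omega> lam"
    using assms(2) unfolding charges_dominate_def .
  have finite_sums: "sum (walk_prob \<omega>i rho) Y \<le> gamma_init \<Omega> \<omega> \<omega>i * word_weight lam W"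
    if "finite Y" "Y \<subseteq> X" for Y
    using assms(5) \<open>Y \<subseteq> X\<close>
    by (intro valid_walks_prob_le[OF assms(1) lam assms(3) \<open>finite Y\<close> valid_walks_subset[OF assms(4)]]) auto
  have "walk_prob \<omega>i rho summable_on X"
  proof (rule nonneg_bdd_above_summable_on)
    show "0 \<le> walk_prob \<omega>i rho \<tau>" if "\<tau> \<in> X" for \<tau>
      using assms(1) walk_prob_nonneg[OF _ valid_walks_is_walk[OF assms(4) that]]
      unfolding setting_def by simp
    show "bdd_above (sum (walk_prob \<omega>i rho) ` {Y. Y \<subseteq> X \<and> finite Y})"
      using finite_sums by (intro bdd_aboveI) auto
  qed
  moreover from this finite_sums
  have "(\<Sum>\<^sub>\<infinity>\<tau>\<in>X. walk_prob \<omega>i rho \<tau>) \<le> gamma_init \<Omega> \<omega> \<omega>i * word_weight lam W"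
    by (rule infsum_le_finite_sums)
  ultimately show ?thesis ..
qed

end
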